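(* Let $\mathcal A$ and $\mathcal B$ be collections, and set $\mathcal B_\Gamma=\{B\in\mathcal B:\text{every infinite }B'\subseteq B\text{ belongs to }\mathcal B\}$. If $\mathcal A$ is a filter base, then $\mathrm{I}\uparrow G_1(\mathcal A,\neg\mathcal B)$ if and only if $\mathrm{I}\uparrow G_1(\mathcal A,\neg\mathcal B_\Gamma)$.
   Context: $\mathcal A$ is a filter base if its members are nonempty sets and for all $A_1,A_2\in\mathcal A$ there is $A_3\in\mathcal A$ with $A_3\subseteq A_1\cap A_2$. For collections $\mathcal E,\mathcal C$, in the game $G_1(\mathcal E,\mathcal C)$, at each inning $n\in\omega$ player One plays $E_n\in\mathcal E$ and Two picks $x_n\in E_n$; Two wins iff $\{x_n:n\in\omega\}\in\mathcal C$, otherwise One wins. $\neg\mathcal C$ is the complement of $\mathcal C$ (so Two wins $G_1(\mathcal E,\neg\mathcal C)$ iff $\{x_n:n\in\omega\}\notin\mathcal C$). A strategy for One maps each finite sequence of Two's previous moves to a move in $\mathcal E$; it is winning if One wins every play following it. $\mathrm{I}\uparrow G$ means One has a winning strategy in $G$. *)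

theory Defs
  imports Main
begin

definition filter_base :: "'a set set \<Rightarrow> bool" where
  "filter_base \<A> \<longleftrightarrow> (\<forall>A\<in>\<A>. A \<noteq> {}) \<and>
     (\<forall>A1\<in>\<A>. \<forall>A2\<in>\<A>. \<exists>A3\<in>\<A>. A3 \<subseteq> A1 \<inter> A2)"

text \<open>A strategy for One in G_1(E, C) maps each finite sequence of Two's previous
  moves to a member of E.\<close>
definition one_strategy :: "'a set set \<Rightarrow> ('a list \<Rightarrow> 'a set) \<Rightarrow> bool" where
  "one_strategy E \<sigma> \<longleftrightarrow> (\<forall>s. \<sigma> s \<in> E)"

definition follows_strategy :: "('a list \<Rightarrow> 'a set) \<Rightarrow> (nat \<Rightarrow> 'a) \<Rightarrow> bool" where
  "follows_strategy \<sigma> x \<longleftrightarrow> (\<forall>n. x n \<in> \<sigma> (map x [0..<n]))"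

text \<open>One has a winning strategy in G_1(E, C): Two wins a play iff the set of
  Two's picks belongs to C.\<close>
definition one_wins_G1 :: "'a set set \<Rightarrow> 'a set set \<Rightarrow> bool" where
  "one_wins_G1 E C \<longleftrightarrow>
     (\<exists>\<sigma>. one_strategy E \<sigma> \<and> (\<forall>x. follows_strategy \<sigma> x \<longrightarrow> range x \<notin> C))"

definition Gamma_part :: "'a set set \<Rightarrow> 'a set set" where
  "Gamma_part \<B> = {B \<in> \<B>. \<forall>B'. B' \<subseteq> B \<and> infinite B' \<longrightarrow> B' \<in> \<B>}"

end

theory Submission
  imports Defs "HOL-Library.Infinite_Set"
begin

text \<open>Let \<open>\<sigma>\<close> be a winning strategy for One in \<open>G\<^sub>1(\<A>, \<not>\<B>)\<close>. Since \<open>\<A>\<close> is a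
  filter base, One can instead play a set \<open>\<tau>(s)\<close> contained in \<open>\<sigma>(t)\<close> for each of the
  finitely many sequences \<open>t\<close> of length at most \<open>|s|\<close> with entries from \<open>s\<close>. A play
  against \<open>\<tau>\<close> is then a play against \<open>\<sigma>\<close>, and so is each of its subsequences. Any
  infinite subset of the set of Two's picks is the range of such a subsequence, hence
  lies in \<open>\<B>\<close>; so \<open>\<tau>\<close> wins \<open>G\<^sub>1(\<A>, \<not>\<B>\<^sub>\<Gamma>)\<close>.\<close>

lemma filter_base_Inter_finite:
  assumes "filter_base \<A>" and "finite F" "F \<noteq> {}" "F \<subseteq> \<A>"
  shows "\<exists>A\<in>\<A>. A \<subseteq> \<Inter>F"
  using assms(2-4)
proof (induction F rule: finite_ne_induct)
  case (singleton B)
  then show ?case by auto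
next
  case (insert B F)
  then obtain A where "A \<in> \<A>" "A \<subseteq> \<Inter>F" by auto
  moreover obtain A' where "A' \<in> \<A>" "A' \<subseteq> B \<inter> A"
    using assms(1) \<open>A \<in> \<A>\<close> insert.prems unfolding filter_base_def by (meson insert_subset)
  ultimately show ?case by auto
qed

definition strategy_refines :: "('a list \<Rightarrow> 'a set) \<Rightarrow> ('a list \<Rightarrow> 'a set) \<Rightarrow> bool" where
  "strategy_refines \<tau> \<sigma> \<longleftrightarrow>
     (\<forall>s t. set t \<subseteq> set s \<and> length t \<le> length s \<longrightarrow> \<tau> s \<subseteq> \<sigma> t)"

lemma filter_base_refining_strategy:
  assumes "filter_base \<A>" and "one_strategy \<A> \<sigma>"
  obtains \<tau> where "one_strategy \<A> \<tau>" and "strategy_refines \<tau> \<sigma>"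
proof -
  define T where "T s = \<sigma> ` {t. set t \<subseteq> set s \<and> length t \<le> length s}" for s
  have "\<exists>A\<in>\<A>. A \<subseteq> \<Inter>(T s)" for s
  proof (rule filter_base_Inter_finite[OF assms(1)])
    show "finite (T s)"
      unfolding T_def by (intro finite_imageI finite_lists_length_le) simp
    show "T s \<noteq> {}"
      unfolding T_def by auto
    show "T s \<subseteq> \<A>"
      using assms(2) unfolding T_def one_strategy_def by auto
  qed
  then obtain \<tau> where "\<And>s. \<tau> s \<in> \<A>" and "\<And>s. \<tau> s \<subseteq> \<Inter>(T s)"
    by metis
  then show thesis
    by (intro that) (auto simp: one_strategy_def strategy_refines_def T_def)
qed

lemma follows_strategy_subsequence:
  assumes "strategy_refines \<tau> \<sigma>" and "follows_strategy \<tau> x" and "strict_mono k"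
  shows "follows_strategy \<sigma> (x \<circ> k)"
  unfolding follows_strategy_def
proof
  fix n
  have "x (k n) \<in> \<tau> (map x [0..<k n])"
    using assms(2) unfolding follows_strategy_def by blast
  moreover have "set (map (x \<circ> k) [0..<n]) \<subseteq> set (map x [0..<k n])"
    using assms(3) by (auto simp: strict_mono_def)
  moreover have "length (map (x \<circ> k) [0..<n]) \<le> length (map x [0..<k n])"
    using strict_mono_imp_increasing[OF assms(3)] by simp
  ultimately show "(x \<circ> k) n \<in> \<sigma> (map (x \<circ> k) [0..<n])"
    using assms(1) unfolding strategy_refines_def comp_apply by blast
qed

lemma infinite_subset_range_subsequence:
  assumes "B \<subseteq> range x" and "infinite B"
  obtains k :: "nat \<Rightarrow> nat" where "strict_mono k" and "range (x \<circ> k) = B"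
proof
  let ?K = "x -` B"
  have "x ` ?K = B"
    using assms(1) by blast
  then have "infinite ?K"
    using assms(2) by (metis finite_imageI)
  then show "strict_mono (enumerate ?K)" and "range (x \<circ> enumerate ?K) = B"
    using \<open>x ` ?K = B\<close>
    unfolding image_comp[symmetric] by (simp_all add: strict_mono_enumerate range_enumerate)
qed

lemma refining_strategy_plays_in_Gamma_part:
  assumes "strategy_refines \<tau> \<sigma>"
    and wins: "\<And>y. follows_strategy \<sigma> y \<Longrightarrow> range y \<in> \<B>"
    and "follows_strategy \<tau> x"
  shows "range x \<in> Gamma_part \<B>"
proof -
  have subsequence_in: "range (x \<circ> k) \<in> \<B>" if "strict_mono k" for k :: "nat \<Rightarrow> nat"
    using wins follows_strategy_subsequence[OF assms(1,3) that] .
  then have "range x \<in> \<B>"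
    by (metis comp_id strict_mono_def id_apply)
  moreover have "B \<in> \<B>" if "B \<subseteq> range x" "infinite B" for B
    using infinite_subset_range_subsequence[OF that] subsequence_in by metis
  ultimately show ?thesis
    unfolding Gamma_part_def by blast
qed

theorem mainTheorem3:
  fixes \<A> \<B> :: "'a set set"
  assumes "filter_base \<A>"
  shows "one_wins_G1 \<A> (- \<B>) \<longleftrightarrow> one_wins_G1 \<A> (- Gamma_part \<B>)"
proof
  assume "one_wins_G1 \<A> (- \<B>)"
  then obtain \<sigma> where "one_strategy \<A> \<sigma>"
    and wins: "\<And>y. follows_strategy \<sigma> y \<Longrightarrow> range y \<in> \<B>"
    unfolding one_wins_G1_def by auto
  then obtain \<tau> where "one_strategy \<A> \<tau>" and "strategy_refines \<tau> \<sigma>"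
    using filter_base_refining_strategy[OF assms] by blast
  then show "one_wins_G1 \<A> (- Gamma_part \<B>)"
    unfolding one_wins_G1_def
    using refining_strategy_plays_in_Gamma_part[OF _ wins] by auto
next
  assume "one_wins_G1 \<A> (- Gamma_part \<B>)"
  then show "one_wins_G1 \<A> (- \<B>)"
    unfolding one_wins_G1_def Gamma_part_def by blast
qed

end
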